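(* Let $A_1,A_2,B_1,B_2,C_1,C_2$ be pairwise intersecting compact convex sets in the plane (not necessarily distinct). Suppose $o(A_1A_2B_1B_2)=o(A_1A_2C_1C_2)=o(B_1B_2C_1C_2)=0$, $o(A_1B_1C_1)\ne0$ and $o(A_2B_2C_2)\ne0$. Then $o(A_1B_1C_1)=o(A_2B_2C_2)$.
   Context: For three pairwise intersecting compact convex sets $X,Y,Z$ in the plane: $o(XYZ)=0$ if $X\cap Y\cap Z\neq\emptyset$; otherwise $o(XYZ)=o(xyz)$ for any $x\in Y\cap Z$, $y\in X\cap Z$, $z\in X\cap Y$, where for points $o(xyz)=+1$ for a counterclockwise and $-1$ for a clockwise triangle (independent of the choice). For sets $X_1,\dots,X_n$, the shorthand $o(X_1\dots X_n)=0$ means $o(X_iX_jX_k)=0$ for all $i<j<k$. *)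

theory Defs
  imports "HOL-Analysis.Analysis"
begin

definition orient_pts :: "real^2 \<Rightarrow> real^2 \<Rightarrow> real^2 \<Rightarrow> int" where
  "orient_pts x y z =
     \<lfloor>sgn ((y$1 - x$1) * (z$2 - x$2) - (y$2 - x$2) * (z$1 - x$1))\<rfloor>"

text \<open>Orientation of three pairwise intersecting compact convex sets: 0 if they have a common
  point, otherwise the orientation of x \<in> Y\<inter>Z, y \<in> X\<inter>Z, z \<in> X\<inter>Y (independent of the choice).\<close>
definition orient_sets :: "(real^2) set \<Rightarrow> (real^2) set \<Rightarrow> (real^2) set \<Rightarrow> int" where
  "orient_sets X Y Z =
     (if X \<inter> Y \<inter> Z \<noteq> {} then 0
      else orient_pts (SOME x. x \<in> Y \<inter> Z) (SOME y. y \<in> X \<inter> Z) (SOME z. z \<in> X \<inter> Y))"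

definition orient4_zero :: "(real^2) set \<Rightarrow> (real^2) set \<Rightarrow> (real^2) set \<Rightarrow> (real^2) set \<Rightarrow> bool" where
  "orient4_zero X1 X2 X3 X4 \<longleftrightarrow>
     orient_sets X1 X2 X3 = 0 \<and> orient_sets X1 X2 X4 = 0 \<and>
     orient_sets X1 X3 X4 = 0 \<and> orient_sets X2 X3 X4 = 0"

end

theory Submission
  imports Defs
begin

text \<open>For pairwise intersecting convex sets, o(XYZ) = 0 holds exactly when X, Y, Z have a
  common point: of three collinear witnesses one lies between the other two and hence in all three
  sets. If there is no common point, the orientation determinant of the witnesses never vanishes,
  so by convexity of the pairwise intersections its sign does not depend on the witnesses.

  Thus o(A1 A2 B1 B2) = 0 says that any three of these four sets meet, and Helly's theorem in the
  plane yields w \<in> A1 \<inter> A2 \<inter> B1 \<inter> B2; likewise v \<in> A1 \<inter> A2 \<inter> C1 \<inter> C2 and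
  u \<in> B1 \<inter> B2 \<inter> C1 \<inter> C2. The points u, v, w are admissible witnesses for both (A1, B1, C1)
  and (A2, B2, C2), so both orientations equal o(uvw).\<close>

definition orient_det :: "real^2 \<Rightarrow> real^2 \<Rightarrow> real^2 \<Rightarrow> real" where
  "orient_det x y z = (y$1 - x$1) * (z$2 - x$2) - (y$2 - x$2) * (z$1 - x$1)"

lemma orient_pts_eq_floor_sgn: "orient_pts x y z = \<lfloor>sgn (orient_det x y z)\<rfloor>"
  unfolding orient_pts_def orient_det_def ..

lemma orient_pts_eq_0_iff: "orient_pts x y z = 0 \<longleftrightarrow> orient_det x y z = 0"
  unfolding orient_pts_eq_floor_sgn by (simp add: sgn_if floor_minus)

lemma orient_det_cyclic: "orient_det x y z = orient_det y z x"
  unfolding orient_det_def by (simp add: algebra_simps)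

lemma orient_det_convex_comb:
  "orient_det ((1 - t) *\<^sub>R x + t *\<^sub>R x') y z = (1 - t) * orient_det x y z + t * orient_det x' y z"
  unfolding orient_det_def by (simp add: algebra_simps)

lemma parallel_if_cross_eq_0:
  fixes u v :: "real^2"
  assumes "u$1 * v$2 - u$2 * v$1 = 0" and "u \<noteq> 0"
  shows "\<exists>c. v = c *\<^sub>R u"
proof (cases "u$1 = 0")
  case True
  with assms have "u$2 \<noteq> 0" by (metis exhaust_2 vec_eq_iff zero_index)
  with True assms(1) have "v = (v$2 / u$2) *\<^sub>R u"
    by (simp add: vec_eq_iff forall_2)
  then show ?thesis ..
next
  case False
  with assms(1) have "v = (v$1 / u$1) *\<^sub>R u"
    by (simp add: vec_eq_iff forall_2 field_simps)
  then show ?thesis ..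
qed

lemma collinear_if_orient_det_eq_0:
  assumes "orient_det x y z = 0"
  shows "collinear {x, y, z}"
proof -
  have "y - x = 0 \<or> (\<exists>c. z - x = c *\<^sub>R (y - x))"
    using parallel_if_cross_eq_0[of "y - x" "z - x"] assms by (auto simp: orient_det_def)
  then have "collinear {0, y - x, z - x}"
    by (auto simp: collinear_lemma)
  then have "collinear {y, x, z}"
    using collinear_3[of y x z] by simp
  then show ?thesis
    by (simp add: insert_commute)
qed

lemma convex_Int3_nonempty_if_collinear:
  fixes x y z :: "'a::euclidean_space"
  assumes "convex X" "convex Y" "convex Z"
    and "x \<in> Y \<inter> Z" "y \<in> X \<inter> Z" "z \<in> X \<inter> Y" and "collinear {x, y, z}"
  shows "X \<inter> Y \<inter> Z \<noteq> {}"
proof -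
  from assms(7) consider "x \<in> closed_segment y z" | "y \<in> closed_segment z x" | "z \<in> closed_segment x y"
    by (auto simp: collinear_between_cases between_mem_segment)
  then show ?thesis
  proof cases
    case 1
    with assms(1,5,6) have "x \<in> X" by (meson IntD1 convex_contains_segment subsetD)
    with assms(4) show ?thesis by blast
  next
    case 2
    with assms(2,4,6) have "y \<in> Y" by (meson IntD1 IntD2 convex_contains_segment subsetD)
    with assms(5) show ?thesis by blast
  next
    case 3
    with assms(3,4,5) have "z \<in> Z" by (meson IntD2 convex_contains_segment subsetD)
    with assms(6) show ?thesis by blast
  qed
qed

lemma orient_det_neq_0_if_Int3_empty:
  assumes "convex X" "convex Y" "convex Z" "X \<inter> Y \<inter> Z = {}"
    and "x \<in> Y \<inter> Z" "y \<in> X \<inter> Z" "z \<in> X \<inter> Y"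
  shows "orient_det x y z \<noteq> 0"
  using convex_Int3_nonempty_if_collinear[OF assms(1-3,5-7) collinear_if_orient_det_eq_0] assms(4) by blast

lemma sgn_orient_det_eq_first:
  assumes "convex X" "convex Y" "convex Z" "X \<inter> Y \<inter> Z = {}"
    and "x \<in> Y \<inter> Z" "x' \<in> Y \<inter> Z" "y \<in> X \<inter> Z" "z \<in> X \<inter> Y"
  shows "sgn (orient_det x y z) = sgn (orient_det x' y z)"
proof (rule ccontr)
  assume sgn_neq: "sgn (orient_det x y z) \<noteq> sgn (orient_det x' y z)"
  define a where "a = orient_det x y z"
  define b where "b = orient_det x' y z"
  have "a \<noteq> 0" "b \<noteq> 0"
    unfolding a_def b_def using orient_det_neq_0_if_Int3_empty[OF assms(1-4)] assms(5-8) by blast+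
  with sgn_neq have "a * b < 0"
    unfolding a_def[symmetric] b_def[symmetric] by (auto simp: sgn_if mult_less_0_iff split: if_splits)
  define t where "t = a / (a - b)"
  have "0 \<le> t" "t \<le> 1"
    using \<open>a * b < 0\<close> unfolding t_def by (auto simp: divide_simps mult_less_0_iff)
  define p where "p = (1 - t) *\<^sub>R x + t *\<^sub>R x'"
  have "p \<in> Y \<inter> Z"
    unfolding p_def using assms(2,3,5,6) \<open>0 \<le> t\<close> \<open>t \<le> 1\<close> by (auto intro!: convexD)
  moreover have "orient_det p y z = 0"
    using \<open>a * b < 0\<close> unfolding p_def orient_det_convex_comb a_def[symmetric] b_def[symmetric] t_def
    by (auto simp: field_simps mult_less_0_iff)
  ultimately show False
    using orient_det_neq_0_if_Int3_empty[OF assms(1-4) _ assms(7,8)] by blast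
qed

lemma sgn_orient_det_indep:
  assumes "convex X" "convex Y" "convex Z" "X \<inter> Y \<inter> Z = {}"
    and "x \<in> Y \<inter> Z" "x' \<in> Y \<inter> Z" "y \<in> X \<inter> Z" "y' \<in> X \<inter> Z" "z \<in> X \<inter> Y" "z' \<in> X \<inter> Y"
  shows "sgn (orient_det x y z) = sgn (orient_det x' y' z')"
proof -
  have "sgn (orient_det x y z) = sgn (orient_det x' y z)"
    using assms by (intro sgn_orient_det_eq_first[of X Y Z])
  also have "\<dots> = sgn (orient_det y' z x')"
    using assms by (subst orient_det_cyclic, intro sgn_orient_det_eq_first[of Y Z X]) auto
  also have "\<dots> = sgn (orient_det z' x' y')"
    using assms by (subst orient_det_cyclic, intro sgn_orient_det_eq_first[of Z X Y]) auto
  also have "\<dots> = sgn (orient_det x' y' z')"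
    by (metis orient_det_cyclic)
  finally show ?thesis .
qed

lemma orient_sets_eq_orient_pts:
  assumes "convex X" "convex Y" "convex Z" "X \<inter> Y \<inter> Z = {}"
    and "x \<in> Y \<inter> Z" "y \<in> X \<inter> Z" "z \<in> X \<inter> Y"
  shows "orient_sets X Y Z = orient_pts x y z"
proof -
  have "(SOME x. x \<in> Y \<inter> Z) \<in> Y \<inter> Z" "(SOME y. y \<in> X \<inter> Z) \<in> X \<inter> Z" "(SOME z. z \<in> X \<inter> Y) \<in> X \<inter> Y"
    using assms(5-7) by (meson someI)+
  from sgn_orient_det_indep[OF assms(1-4) this(1) assms(5) this(2) assms(6) this(3) assms(7)] show ?thesis
    unfolding orient_sets_def orient_pts_eq_floor_sgn using assms(4) by simp
qed

lemma orient_sets_eq_0_iff: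
  assumes "convex X" "convex Y" "convex Z"
    and "X \<inter> Y \<noteq> {}" "X \<inter> Z \<noteq> {}" "Y \<inter> Z \<noteq> {}"
  shows "orient_sets X Y Z = 0 \<longleftrightarrow> X \<inter> Y \<inter> Z \<noteq> {}"
proof
  assume "orient_sets X Y Z = 0"
  show "X \<inter> Y \<inter> Z \<noteq> {}"
  proof
    assume empty: "X \<inter> Y \<inter> Z = {}"
    obtain x y z where "x \<in> Y \<inter> Z" "y \<in> X \<inter> Z" "z \<in> X \<inter> Y"
      using assms(4-6) by blast
    with assms(1-3) empty have "orient_det x y z \<noteq> 0" "orient_sets X Y Z = orient_pts x y z"
      by (simp_all add: orient_det_neq_0_if_Int3_empty orient_sets_eq_orient_pts)
    with \<open>orient_sets X Y Z = 0\<close> show False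
      by (simp add: orient_pts_eq_0_iff)
  qed
qed (simp add: orient_sets_def)

lemma subset_of_four_covered_by_three:
  assumes "T \<subseteq> {a, b, c, d}" "card T \<le> 3"
  shows "T \<subseteq> {a, b, c} \<or> T \<subseteq> {a, b, d} \<or> T \<subseteq> {a, c, d} \<or> T \<subseteq> {b, c, d}"
proof (rule ccontr)
  assume "\<not> ?thesis"
  with assms(1) have "a \<in> T" "b \<in> T" "c \<in> T" "d \<in> T"
    and "a \<notin> {b, c, d}" "b \<notin> {a, c, d}" "c \<notin> {a, b, d}" "d \<notin> {a, b, c}"
    by blast+
  then have "4 = card {a, b, c, d}"
    by simp
  also have "\<dots> \<le> card T"
    using \<open>a \<in> T\<close> \<open>b \<in> T\<close> \<open>c \<in> T\<close> \<open>d \<in> T\<close> finite_subset[OF assms(1)] by (intro card_mono) auto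
  finally show False
    using assms(2) by linarith
qed

lemma Helly_four:
  fixes X1 X2 X3 X4 :: "'a::euclidean_space set"
  assumes "DIM('a) = 2"
    and "convex X1" "convex X2" "convex X3" "convex X4"
    and "X1 \<inter> X2 \<inter> X3 \<noteq> {}" "X1 \<inter> X2 \<inter> X4 \<noteq> {}" "X1 \<inter> X3 \<inter> X4 \<noteq> {}" "X2 \<inter> X3 \<inter> X4 \<noteq> {}"
  shows "X1 \<inter> X2 \<inter> X3 \<inter> X4 \<noteq> {}"
proof -
  let ?F = "{X1, X2, X3, X4}"
  have small: "\<Inter>T \<noteq> {}" if "T \<subseteq> ?F" "card T \<le> 3" for T
  proof -
    have "\<Inter>{X1, X2, X3} \<noteq> {}" "\<Inter>{X1, X2, X4} \<noteq> {}" "\<Inter>{X1, X3, X4} \<noteq> {}" "\<Inter>{X2, X3, X4} \<noteq> {}"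
      using assms(6-9) by (simp_all add: Int_assoc)
    with subset_of_four_covered_by_three[OF that] show ?thesis
      by (metis Inter_anti_mono subset_empty)
  qed
  have "\<Inter>?F \<noteq> {}"
  proof (cases "card ?F \<le> 3")
    case True
    then show ?thesis by (rule small[OF order_refl])
  next
    case False
    show ?thesis
    proof (rule Helly)
      show "DIM('a) + 1 \<le> card ?F"
        using False assms(1) by simp
      show "\<forall>S\<in>?F. convex S"
        using assms(2-5) by simp
      show "\<Inter>T \<noteq> {}" if "T \<subseteq> ?F" "card T = DIM('a) + 1" for T
        using that assms(1) by (intro small) auto
    qed
  qed
  then show ?thesis by (simp add: Int_assoc)
qed

theorem lemma4:
  fixes A1 A2 B1 B2 C1 C2 :: "(real^2) set"
  assumes "\<forall>X\<in>{A1, A2, B1, B2, C1, C2}. compact X \<and> convex X"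
    and "\<forall>X\<in>{A1, A2, B1, B2, C1, C2}. \<forall>Y\<in>{A1, A2, B1, B2, C1, C2}. X \<inter> Y \<noteq> {}"
    and "orient4_zero A1 A2 B1 B2"
    and "orient4_zero A1 A2 C1 C2"
    and "orient4_zero B1 B2 C1 C2"
    and "orient_sets A1 B1 C1 \<noteq> 0"
    and "orient_sets A2 B2 C2 \<noteq> 0"
  shows "orient_sets A1 B1 C1 = orient_sets A2 B2 C2"
proof -
  let ?S = "{A1, A2, B1, B2, C1, C2}"
  have convex: "convex X" if "X \<in> ?S" for X
    using bspec[OF assms(1) that] by (rule conjunct2)
  have pairwise: "X \<inter> Y \<noteq> {}" if "X \<in> ?S" "Y \<in> ?S" for X Y
    using bspec[OF bspec[OF assms(2) that(1)] that(2)] .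
  have meet3: "X \<inter> Y \<inter> Z \<noteq> {}" if "X \<in> ?S" "Y \<in> ?S" "Z \<in> ?S" "orient_sets X Y Z = 0" for X Y Z
    using orient_sets_eq_0_iff[OF convex convex convex pairwise pairwise pairwise] that by simp
  have meet4: "X1 \<inter> X2 \<inter> X3 \<inter> X4 \<noteq> {}"
    if "orient4_zero X1 X2 X3 X4" "X1 \<in> ?S" "X2 \<in> ?S" "X3 \<in> ?S" "X4 \<in> ?S" for X1 X2 X3 X4
    using that unfolding orient4_zero_def by - (rule Helly_four, simp_all add: convex meet3)
  have "B1 \<inter> B2 \<inter> C1 \<inter> C2 \<noteq> {}" "A1 \<inter> A2 \<inter> C1 \<inter> C2 \<noteq> {}" "A1 \<inter> A2 \<inter> B1 \<inter> B2 \<noteq> {}"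
    by (rule meet4[OF assms(5)] meet4[OF assms(4)] meet4[OF assms(3)]; simp)+
  then obtain u v w where "u \<in> B1 \<inter> B2 \<inter> C1 \<inter> C2" "v \<in> A1 \<inter> A2 \<inter> C1 \<inter> C2" "w \<in> A1 \<inter> A2 \<inter> B1 \<inter> B2"
    by blast
  moreover have "A1 \<inter> B1 \<inter> C1 = {}" "A2 \<inter> B2 \<inter> C2 = {}"
    using assms(6,7) by (simp_all add: orient_sets_def split: if_splits)
  ultimately have "orient_sets A1 B1 C1 = orient_pts u v w" "orient_sets A2 B2 C2 = orient_pts u v w"
    by (auto intro!: orient_sets_eq_orient_pts convex)
  then show ?thesis by simp
qed

end
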